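(* Let $S$ be a semigroup that satisfies the identity $xyx \approx yx^2$, and suppose that for every identity $\mathbf{u}\approx\mathbf{v}$ satisfied by $S$: (i) $\mathrm{occ}(x,\mathbf{u})=\mathrm{occ}(x,\mathbf{v})$ for every letter $x\in\mathcal{X}$; (ii) $\mathrm{fp}(\mathbf{u})=\mathrm{fp}(\mathbf{v})$. Then $\{xyx \approx yx^2\}$ is an identity basis for $S$; in particular, $S$ is finitely based.
   Context: $\mathcal{X}$ is a countably infinite alphabet of letters; words are elements of the free monoid over $\mathcal{X}$. For a word $\mathbf{w}$ and a letter $x$, $\mathrm{occ}(x,\mathbf{w})$ is the number of occurrences of $x$ in $\mathbf{w}$. The final part $\mathrm{fp}(\mathbf{w})$ is the word obtained from $\mathbf{w}$ by retaining only the last occurrence of each letter. An identity is a formal expression $\mathbf{u}\approx\mathbf{v}$ with $\mathbf{u},\mathbf{v}$ words; a semigroup $S$ satisfies it if $\varphi(\mathbf{u})=\varphi(\mathbf{v})$ for every map $\varphi:\mathcal{X}\to S$ (extended homomorphically). An identity $\mathbf{u}\approx\mathbf{v}$ is derived from a set $\Sigma$ of identities if there is a sequence of words $\mathbf{u}=\mathbf{u}_1,\dots,\mathbf{u}_n=\mathbf{v}$ such that for each $i$, $\mathbf{u}_i=\mathbf{a}_i\varphi_i(\mathbf{p}_i)\mathbf{b}_i$ and $\mathbf{u}_{i+1}=\mathbf{a}_i\varphi_i(\mathbf{q}_i)\mathbf{b}_i$ for some words $\mathbf{a}_i,\mathbf{b}_i$, some endomorphism $\varphi_i$ of the free semigroup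 $\mathcal{X}^+$, and some identity $\mathbf{p}_i\approx\mathbf{q}_i$ in $\Sigma$. An identity basis for $S$ is a set $\Sigma$ of identities satisfied by $S$ such that every identity satisfied by $S$ is derived from $\Sigma$; $S$ is finitely based if it has a finite identity basis. *)

theory Defs
  imports Main
begin

text \<open>Letters are natural numbers (a countably infinite alphabet); words are lists
of letters. Identities are pairs of words; semigroup identities involve nonempty words.\<close>

type_synonym word = "nat list"
type_synonym identity = "word \<times> word"

fun eval_word :: "(nat \<Rightarrow> 'a::semigroup_mult) \<Rightarrow> word \<Rightarrow> 'a" where
  "eval_word \<phi> [x] = \<phi> x"
| "eval_word \<phi> (x # y # w) = \<phi> x * eval_word \<phi> (y # w)"
| "eval_word \<phi> [] = undefined"

definition satisfies :: "'a::semigroup_mult itself \<Rightarrow> identity \<Rightarrow> bool" where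
  "satisfies S uv \<longleftrightarrow> fst uv \<noteq> [] \<and> snd uv \<noteq> [] \<and>
     (\<forall>\<phi> :: nat \<Rightarrow> 'a. eval_word \<phi> (fst uv) = eval_word \<phi> (snd uv))"

definition occ :: "nat \<Rightarrow> word \<Rightarrow> nat" where
  "occ x w = count_list w x"

fun fp :: "word \<Rightarrow> word" where
  "fp [] = []"
| "fp (x # w) = (if x \<in> set w then fp w else x # fp w)"

text \<open>Applying an endomorphism of the free semigroup (letters to nonempty words).\<close>
definition subst :: "(nat \<Rightarrow> word) \<Rightarrow> word \<Rightarrow> word" where
  "subst \<phi> w = concat (map \<phi> w)"

definition deriv_step :: "identity set \<Rightarrow> word \<Rightarrow> word \<Rightarrow> bool" where
  "deriv_step \<Sigma> u v \<longleftrightarrow>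
     (\<exists>a b \<phi> p q. ((p, q) \<in> \<Sigma> \<or> (q, p) \<in> \<Sigma>) \<and> (\<forall>x. \<phi> x \<noteq> []) \<and>
        u = a @ subst \<phi> p @ b \<and> v = a @ subst \<phi> q @ b)"

definition derived :: "identity set \<Rightarrow> identity \<Rightarrow> bool" where
  "derived \<Sigma> uv \<longleftrightarrow> (deriv_step \<Sigma>)\<^sup>*\<^sup>* (fst uv) (snd uv)"

definition identity_basis :: "'a::semigroup_mult itself \<Rightarrow> identity set \<Rightarrow> bool" where
  "identity_basis S \<Sigma> \<longleftrightarrow> (\<forall>uv\<in>\<Sigma>. satisfies S uv) \<and>
     (\<forall>uv. satisfies S uv \<longrightarrow> derived \<Sigma> uv)"

definition finitely_based :: "'a::semigroup_mult itself \<Rightarrow> bool" where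
  "finitely_based S \<longleftrightarrow> (\<exists>\<Sigma>. finite \<Sigma> \<and> identity_basis S \<Sigma>)"

end

theory Submission
  imports Defs
begin

text \<open>Using \<open>x y x \<approx> y x x\<close>, every occurrence of a letter other than its last one can be
  moved to the right until it sits next to that last occurrence. Hence every word is derivable
  from (and equivalent to) the word obtained from \<open>fp w\<close> by repeating each letter \<open>y\<close> exactly
  \<open>occ y w\<close> times in place. This normal form depends only on the occurrence counts and the final
  part, which by hypothesis coincide on both sides of every identity of \<open>S\<close>.\<close>

definition normal_form :: "word \<Rightarrow> word" where
  "normal_form w = concat (map (\<lambda>y. replicate (occ y w) y) (fp w))"

lemma set_fp [simp]: "set (fp w) = set w"
  by (induction w) auto

lemma distinct_fp: "distinct (fp w)"
  by (induction w) auto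

lemma occ_Cons: "occ y (x # w) = (if y = x then Suc (occ y w) else occ y w)"
  by (simp add: occ_def)

lemma normal_form_eqI:
  assumes "\<forall>x. occ x u = occ x v" and "fp u = fp v"
  shows "normal_form u = normal_form v"
  using assms by (simp add: normal_form_def)

lemma normal_form_Cons_notin:
  assumes "x \<notin> set w"
  shows "normal_form (x # w) = x # normal_form w"
proof -
  have same_fp: "map (\<lambda>y. replicate (occ y (x # w)) y) (fp w) = map (\<lambda>y. replicate (occ y w) y) (fp w)"
    using assms by (auto simp: occ_Cons)
  have "occ x (x # w) = 1"
    using assms by (simp add: occ_def)
  then show ?thesis
    using assms by (simp add: normal_form_def same_fp)
qed

lemma normal_form_Cons_in:
  assumes "x \<in> set w"
  obtains A rest where "normal_form w = A @ x # rest" and "normal_form (x # w) = A @ x # x # rest"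
proof -
  obtain P Q where PQ: "fp w = P @ x # Q"
    using assms split_list[of x "fp w"] by auto
  with distinct_fp[of w] have "x \<notin> set P" "x \<notin> set Q"
    by auto
  then have same_P: "map (\<lambda>y. replicate (occ y (x # w)) y) P = map (\<lambda>y. replicate (occ y w) y) P"
    and same_Q: "map (\<lambda>y. replicate (occ y (x # w)) y) Q = map (\<lambda>y. replicate (occ y w) y) Q"
    by (auto simp: occ_Cons)
  obtain n where n: "occ x w = Suc n"
    using assms by (metis occ_def count_list_0_iff not0_implies_Suc)
  then have occ_x: "occ x (x # w) = Suc (Suc n)"
    by (simp add: occ_Cons)
  let ?A = "concat (map (\<lambda>y. replicate (occ y w) y) P)"
  let ?rest = "replicate n x @ concat (map (\<lambda>y. replicate (occ y w) y) Q)"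
  have "normal_form w = ?A @ x # ?rest"
    by (simp add: normal_form_def PQ n)
  moreover have "normal_form (x # w) = ?A @ x # x # ?rest"
    using assms by (simp add: normal_form_def PQ same_P same_Q occ_x)
  ultimately show ?thesis
    using that by blast
qed

lemma deriv_step_sym: "deriv_step \<Sigma> u v \<Longrightarrow> deriv_step \<Sigma> v u"
  unfolding deriv_step_def by blast

lemma derivable_sym: "(deriv_step \<Sigma>)\<^sup>*\<^sup>* u v \<Longrightarrow> (deriv_step \<Sigma>)\<^sup>*\<^sup>* v u"
  by (induction rule: rtranclp_induct) (auto intro: converse_rtranclp_into_rtranclp deriv_step_sym)

lemma deriv_step_Cons: "deriv_step \<Sigma> u v \<Longrightarrow> deriv_step \<Sigma> (x # u) (x # v)"
  unfolding deriv_step_def by (metis append_Cons)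

lemma derivable_Cons: "(deriv_step \<Sigma>)\<^sup>*\<^sup>* u v \<Longrightarrow> (deriv_step \<Sigma>)\<^sup>*\<^sup>* (x # u) (x # v)"
  by (induction rule: rtranclp_induct) (auto intro: rtranclp.rtrancl_into_rtrancl deriv_step_Cons)

lemma deriv_step_xyx:
  assumes "([0, 1, 0], [1, 0, 0]) \<in> \<Sigma>" and "A \<noteq> []"
  shows "deriv_step \<Sigma> (x # A @ x # b) (A @ x # x # b)"
proof -
  define \<phi> where "\<phi> = (\<lambda>i::nat. if i = 1 then A else [x])"
  have "\<forall>i. \<phi> i \<noteq> []" and "subst \<phi> [0, 1, 0] = x # A @ [x]" and "subst \<phi> [1, 0, 0] = A @ [x, x]"
    using assms(2) by (simp_all add: \<phi>_def subst_def)
  then show ?thesis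
    unfolding deriv_step_def using assms(1)
    by (intro exI[of _ "[]"] exI[of _ b] exI[of _ \<phi>] exI[of _ "[0, 1, 0]"] exI[of _ "[1, 0, 0]"])
      simp
qed

lemma derivable_normal_form:
  assumes "([0, 1, 0], [1, 0, 0]) \<in> \<Sigma>"
  shows "(deriv_step \<Sigma>)\<^sup>*\<^sup>* w (normal_form w)"
proof (induction w)
  case Nil
  show ?case by (simp add: normal_form_def)
next
  case (Cons x w)
  have to_Cons: "(deriv_step \<Sigma>)\<^sup>*\<^sup>* (x # w) (x # normal_form w)"
    using derivable_Cons[OF Cons.IH] .
  show ?case
  proof (cases "x \<in> set w")
    case False
    then show ?thesis
      using to_Cons by (simp add: normal_form_Cons_notin)
  next
    case True
    then obtain A rest where nf_w: "normal_form w = A @ x # rest"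
      and nf_xw: "normal_form (x # w) = A @ x # x # rest"
      by (rule normal_form_Cons_in)
    have "(deriv_step \<Sigma>)\<^sup>*\<^sup>* (x # A @ x # rest) (A @ x # x # rest)"
      using deriv_step_xyx[OF assms, of A x rest] by (cases "A = []") auto
    then show ?thesis
      using to_Cons nf_w nf_xw by simp
  qed
qed

lemma derived_if_same_occ_fp:
  assumes "([0, 1, 0], [1, 0, 0]) \<in> \<Sigma>"
    and "\<forall>x. occ x u = occ x v" and "fp u = fp v"
  shows "derived \<Sigma> (u, v)"
proof -
  have "(deriv_step \<Sigma>)\<^sup>*\<^sup>* u (normal_form v)"
    using derivable_normal_form[OF assms(1), of u] normal_form_eqI[OF assms(2,3)] by simp
  then show ?thesis
    unfolding derived_def
    using derivable_sym[OF derivable_normal_form[OF assms(1), of v]] by simp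
qed

theorem theorem3p1:
  fixes S :: "'a::semigroup_mult itself"
  assumes "satisfies S ([0, 1, 0], [1, 0, 0])"
    and "\<And>u v. satisfies S (u, v) \<Longrightarrow> (\<forall>x. occ x u = occ x v)"
    and "\<And>u v. satisfies S (u, v) \<Longrightarrow> fp u = fp v"
  shows "identity_basis S {([0, 1, 0], [1, 0, 0])} \<and> finitely_based S"
proof -
  have "derived {([0, 1, 0], [1, 0, 0])} (u, v)" if "satisfies S (u, v)" for u v
    using derived_if_same_occ_fp assms(2,3)[OF that] by simp
  then have "identity_basis S {([0, 1, 0], [1, 0, 0])}"
    unfolding identity_basis_def using assms(1) by auto
  then show ?thesis
    unfolding finitely_based_def by blast
qed

end
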